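(* Let $n,m$ be positive integers, let $A_1,\dots,A_m\in\mathbb{S}_n$, and let $\mathcal{A}:\mathbb{S}_n\to\mathbb{R}^m$, $\mathcal{A}(X)=(\langle A_i,X\rangle)_{i=1}^m$, with adjoint $\mathcal{A}^*(y)=\sum_{i=1}^m y_iA_i$. Assume $\mathcal{A}\mathcal{A}^*$ is invertible. Let $b\in\mathbb{R}^m$, $C\in\mathbb{S}_n$, and $D:=\mathcal{A}^*\big((\mathcal{A}\mathcal{A}^* )^{-1}b\big)$. Assume that the problem $$\inf_{y\in\mathbb{R}^m} b^{\intercal}y\quad\text{s.t.}\quad S=\mathcal{A}^*(y)-C\succeq 0,\ \operatorname{diag}(S)=\mathbf{1}\qquad(\mathrm{DSDP})$$ admits a KKT point (defined in the context). Let $0<\sigma_{\min}<\sigma_{\max}$ and let $\{\varepsilon_k\}_{k\in\mathbb{N}},\{\tau_k\}_{k\in\mathbb{N}}\subseteq(0,\infty)$ satisfy $\sum_{k=0}^\infty\varepsilon_k<\infty$ and $\sum_{k=0}^\infty\tau_k<\infty$. Consider sequences generated as follows: $y^0=0$, $\widetilde{X}^0=0$, and for $k=0,1,2,\dots$: choose $\sigma_k\in[\sigma_{\min},\sigma_{\max}]$, a positive integer $p_{k+1}$ and a matrix $Y^{k+1}\in\mathbb{R}^{n\times p_{k+1}}$ all of whose rows have Euclidean norm $1$; set $S^{k+1}=Y^{k+1}(Y^{k+1})^{\intercal}$, $y^{k+1}=(\mathcal{A}\mathcal{A}^* )^{-1}\mathcal{A}(S^{k+1}+C)$, $\widetilde{X}^{k+1}=\widetilde{X}^k-\sigma_k\big(\mathcal{A}^*(y^{k+1})-S^{k+1}-C\big)$,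 $z^{k+1}=\operatorname{diag}\big((\widetilde{X}^{k+1}+D)S^{k+1}\big)$, $X^{k+1}=\widetilde{X}^{k+1}+D-\operatorname{Diag}(z^{k+1})$; and suppose $Y^{k+1}$ satisfies the stopping criterion $$\|X^{k+1}Y^{k+1}\|\le\varepsilon_k\quad\text{and}\quad\lambda_{\min}(X^{k+1})\ge-\tau_k .$$ Let $(\hat S,\hat y,\hat X,\hat z)$ be a limit point of $\{(S^k,y^k,X^k,z^k)\}_{k\ge1}$. Then $(\hat S,\hat y,\hat X,\hat z)$ is a KKT point of (DSDP).
   Context: $\mathbb{S}_n$ is the space of real symmetric $n\times n$ matrices, $\mathbb{S}_n^+$ its PSD cone; $\langle A,B\rangle=\mathrm{Tr}(A^{\intercal}B)$ and $\|\cdot\|$ is the Frobenius norm. For a square matrix $M$, $\operatorname{diag}(M)$ is the vector of its diagonal entries; for a vector $z$, $\operatorname{Diag}(z)$ is the diagonal matrix with diagonal $z$; $\mathbf{1}$ is the all-ones vector; $\lambda_{\min}$ denotes the smallest eigenvalue. A KKT point of (DSDP) is a tuple $(S,y,X,z)\in\mathbb{S}_n\times\mathbb{R}^m\times\mathbb{S}_n\times\mathbb{R}^n$ with $S=\mathcal{A}^*(y)-C$, $S\succeq0$, $\operatorname{diag}(S)=\mathbf{1}$, $X\succeq0$, $\langle X,S\rangle=0$, and $\mathcal{A}(X+\operatorname{Diag}(z))=b$. In the paper's algorithm, $Y^{k+1}$ is obtained by approximately minimizing $Y\mapsto L_{\sigma_k}(YY^{\intercal},y^k,\widetilde{X}^k)$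 over matrices with unit-norm rows, where $L_\sigma(S,y,\widetilde{X})=\langle D,S+C\rangle-\langle\widetilde{X},\mathcal{A}^*(y)-S-C\rangle+\frac{\sigma}{2}\|\mathcal{A}^*(y)-S-C\|^2$; the result only uses the stopping criterion stated. *)

theory Defs
  imports "HOL-Analysis.Analysis"
begin

type_synonym 'n mat = "real^'n^'n"

definition symm :: "'n::finite mat \<Rightarrow> bool" where
  "symm M \<longleftrightarrow> transpose M = M"

definition psd :: "'n::finite mat \<Rightarrow> bool" where
  "psd M \<longleftrightarrow> symm M \<and> (\<forall>v. 0 \<le> v \<bullet> (M *v v))"

definition frob_inner :: "'n::finite mat \<Rightarrow> 'n mat \<Rightarrow> real" where
  "frob_inner M N = (\<Sum>i\<in>UNIV. \<Sum>j\<in>UNIV. M$i$j * N$i$j)"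

definition diagv :: "'n::finite mat \<Rightarrow> real^'n" where
  "diagv M = (\<chi> i. M$i$i)"

definition Diagm :: "real^'n::finite \<Rightarrow> 'n mat" where
  "Diagm z = (\<chi> i j. if i = j then z$i else 0)"

definition Aop :: "('m::finite \<Rightarrow> 'n::finite mat) \<Rightarrow> 'n mat \<Rightarrow> real^'m" where
  "Aop A X = (\<chi> i. frob_inner (A i) X)"

definition Aadj :: "('m::finite \<Rightarrow> 'n::finite mat) \<Rightarrow> real^'m \<Rightarrow> 'n mat" where
  "Aadj A y = (\<Sum>i\<in>UNIV. y$i *\<^sub>R A i)"

definition AAt :: "('m::finite \<Rightarrow> 'n::finite mat) \<Rightarrow> real^'m^'m" where
  "AAt A = (\<chi> i j. frob_inner (A i) (A j))"

definition lambda_min :: "'n::finite mat \<Rightarrow> real" where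
  "lambda_min M = Min {c. \<exists>v. v \<noteq> 0 \<and> M *v v = c *\<^sub>R v}"

definition is_KKT :: "('m::finite \<Rightarrow> 'n::finite mat) \<Rightarrow> real^'m \<Rightarrow> 'n mat
     \<Rightarrow> 'n mat \<Rightarrow> real^'m \<Rightarrow> 'n mat \<Rightarrow> real^'n \<Rightarrow> bool" where
  "is_KKT A b C S y X z \<longleftrightarrow>
     S = Aadj A y - C \<and> psd S \<and> diagv S = (\<chi> i. 1) \<and> psd X \<and>
     frob_inner X S = 0 \<and> Aop A (X + Diagm z) = b"

end

theory Submission
  imports Defs
begin

(* The multipliers Xt^k stay in the kernel of A, and X^(k+1) + Diag z^(k+1) = Xt^(k+1) + D.
   The choice of z^(k+1) makes <X^(k+1), S^(k+1)> = 0 exactly (as diag S^(k+1) = 1), and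
   lambda_min X^(k+1) >= -tau_k makes X^(k+1) + tau_k I psd.  Since psd matrices have nonnegative
   inner product, comparison with a KKT point (S', y', X', z') bounds the inner product of
   Xt^(k+1) - W, where W = X' + Diag z' - D, with the residual r_k = S^(k+1) + C - Aadj y^(k+1)
   by n tau_k.  As Xt^(k+1) = Xt^k + sigma_k r_k, the squared distance ||Xt^k - W||^2 drops by
   sigma_k^2 ||r_k||^2 up to the summable error 2 sigma_k n tau_k, so the residuals are
   square-summable and tend to 0.  The remaining KKT conditions are closed and pass to any
   limit point. *)

lemma frob_inner_eq_inner: "frob_inner M N = M \<bullet> N"
  by (simp add: frob_inner_def inner_vec_def)

lemma symm_iff: "symm M \<longleftrightarrow> (\<forall>i j. M$i$j = M$j$i)"
  by (auto simp: symm_def transpose_def vec_eq_iff)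

lemma symm_add: "symm M \<Longrightarrow> symm N \<Longrightarrow> symm (M + N)"
  and symm_diff: "symm M \<Longrightarrow> symm N \<Longrightarrow> symm (M - N)"
  and symm_scaleR: "symm M \<Longrightarrow> symm (c *\<^sub>R M)"
  and symm_0: "symm 0"
  and symm_Diagm: "symm (Diagm z)"
  by (simp_all add: symm_iff Diagm_def)

lemma symm_quad_form_commute: "symm M \<Longrightarrow> u \<bullet> (M *v v) = v \<bullet> (M *v u)"
  by (metis dot_lmul_matrix inner_commute symm_def transpose_matrix_vector)

lemma quad_form_add_scaleR:
  assumes "symm M"
  shows "(u + t *\<^sub>R w) \<bullet> (M *v (u + t *\<^sub>R w))
           = u \<bullet> (M *v u) + 2 * t * (w \<bullet> (M *v u)) + t\<^sup>2 * (w \<bullet> (M *v w))"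
  using symm_quad_form_commute[OF assms, of u w]
  by (simp add: matrix_vector_right_distrib matrix_vector_mult_scaleR inner_add_left inner_add_right
      power2_eq_square distrib_left)

lemma quad_form_axis: "axis i 1 \<bullet> (M *v axis j 1) = M$i$j"
  by (simp add: inner_axis' matrix_vector_mult_basis column_def)

lemma mat_1_inner: "mat 1 \<bullet> M = (\<Sum>i\<in>UNIV. M$i$i)"
  by (simp add: mat_def inner_vec_def if_distrib[of "\<lambda>x. x * _"] cong: if_cong)

lemma Diagm_inner: "Diagm z \<bullet> M = (\<Sum>i\<in>UNIV. z$i * M$i$i)"
  by (simp add: Diagm_def inner_vec_def if_distrib[of "\<lambda>x. x * _"] cong: if_cong)

lemma mat_1_mult_vector_scaleR: "(t *\<^sub>R mat 1) *v v = t *\<^sub>R (v :: real^'n::finite)"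
  by (simp flip: scaleR_matrix_vector_assoc)

lemma linear_coeff_eq_0_if_quadratic_nonneg:
  fixes a K :: real
  assumes "\<And>t. 0 \<le> a * t + K * t\<^sup>2"
  shows "a = 0"
proof (rule ccontr)
  assume "a \<noteq> 0"
  define p where "p = \<bar>K\<bar> + 1"
  have "p > 0" by (simp add: p_def add_nonneg_pos)
  have "a * (- a / p) + K * (- a / p)\<^sup>2 = a\<^sup>2 * (K - p) / p\<^sup>2"
    using \<open>p > 0\<close> by (simp add: field_simps power2_eq_square)
  also have "\<dots> < 0"
    using \<open>a \<noteq> 0\<close> \<open>p > 0\<close> by (intro divide_neg_pos mult_pos_neg) (auto simp: p_def)
  finally show False using assms[of "- a / p"] by simp
qed

definition outer :: "real^'n::finite \<Rightarrow> real^'n^'n" where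
  "outer v = (\<chi> i j. v$i * v$j)"

lemma quad_form_eq_inner_outer: "v \<bullet> (M *v v) = M \<bullet> outer v"
  by (simp add: outer_def inner_vec_def matrix_vector_mult_def sum_distrib_left mult_ac)

lemma inner_outer_outer: "outer u \<bullet> outer v = (u \<bullet> v)\<^sup>2"
  by (simp add: outer_def inner_vec_def power2_eq_square sum_product mult_ac)

lemma gram_eq_sum_outer: "(\<chi> i l. \<Sum>j\<in>J. f j $ i * f j $ l) = (\<Sum>j\<in>J. outer (f j))"
  by (simp add: vec_eq_iff outer_def)

lemma diagv_sum_outer: "diagv (\<Sum>j\<in>J. outer (f j)) = (\<chi> i. \<Sum>j\<in>J. (f j $ i)\<^sup>2)"
  by (simp add: diagv_def outer_def power2_eq_square)

lemma psd_sum_outer: "psd (\<Sum>j\<in>J. outer (f j))"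
  unfolding psd_def
proof
  show "symm (\<Sum>j\<in>J. outer (f j))"
    by (simp add: symm_iff outer_def mult.commute)
  show "\<forall>v. 0 \<le> v \<bullet> ((\<Sum>j\<in>J. outer (f j)) *v v)"
    by (simp add: quad_form_eq_inner_outer inner_sum_left inner_outer_outer sum_nonneg)
qed

lemma closed_psd: "closed {M. psd M}"
proof -
  have eq: "{M. psd M} = (\<Inter>i. \<Inter>j. {M. M$i$j = M$j$i}) \<inter> (\<Inter>v. {M. 0 \<le> M \<bullet> outer v})"
    by (auto simp: psd_def symm_iff quad_form_eq_inner_outer)
  show ?thesis
    unfolding eq by (intro closed_Int closed_INT ballI closed_Collect_eq closed_Collect_le continuous_intros)
qed

lemma psd_diag_nonneg: "psd S \<Longrightarrow> 0 \<le> S$i$i"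
  by (metis psd_def quad_form_axis)

lemma psd_eq_0_if_diag_eq_0:
  assumes "psd S" "S$i$i = 0"
  shows "S$i$j = 0"
proof -
  have "0 \<le> 2 * S$j$i * t + S$j$j * t\<^sup>2" for t
  proof -
    have "0 \<le> (axis i 1 + t *\<^sub>R axis j 1) \<bullet> (S *v (axis i 1 + t *\<^sub>R axis j 1))"
      using assms(1) by (simp add: psd_def)
    also have "\<dots> = 2 * S$j$i * t + S$j$j * t\<^sup>2"
      using assms quad_form_add_scaleR[of S "axis i 1" t "axis j 1"]
      by (simp add: psd_def quad_form_axis)
    finally show ?thesis .
  qed
  then have "2 * S$j$i = 0" by (rule linear_coeff_eq_0_if_quadratic_nonneg)
  then show ?thesis using assms(1) by (simp add: psd_def symm_iff)
qed

lemma psd_schur_complement: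
  assumes "psd S" "0 < S$i$i"
  shows "psd (S - (1 / S$i$i) *\<^sub>R outer (S$i))"
  unfolding psd_def
proof
  show "symm (S - (1 / S$i$i) *\<^sub>R outer (S$i))"
    using assms(1) by (simp add: psd_def symm_iff outer_def mult.commute)
  show "\<forall>v. 0 \<le> v \<bullet> ((S - (1 / S$i$i) *\<^sub>R outer (S$i)) *v v)"
  proof
    fix v
    define t where "t = - (S$i \<bullet> v) / S$i$i"
    have row: "axis i 1 \<bullet> (S *v v) = S$i \<bullet> v"
      unfolding inner_axis' by (simp add: matrix_vector_mult_def inner_vec_def)
    \<comment> \<open>the new form at \<open>v\<close> is the minimum of the old one along \<open>v + t *\<^sub>R axis i 1\<close>\<close>
    have "0 \<le> (v + t *\<^sub>R axis i 1) \<bullet> (S *v (v + t *\<^sub>R axis i 1))"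
      using assms(1) by (simp add: psd_def)
    also have "\<dots> = v \<bullet> (S *v v) - (S$i \<bullet> v)\<^sup>2 / S$i$i"
      using assms quad_form_add_scaleR[of S v t "axis i 1"]
      by (simp add: psd_def row quad_form_axis t_def power2_eq_square field_simps)
    also have "\<dots> = v \<bullet> ((S - (1 / S$i$i) *\<^sub>R outer (S$i)) *v v)"
      by (simp add: quad_form_eq_inner_outer inner_diff_left inner_outer_outer
          inner_commute[of "S$i"] divide_inverse)
    finally show "0 \<le> v \<bullet> ((S - (1 / S$i$i) *\<^sub>R outer (S$i)) *v v)" .
  qed
qed

lemma psd_inner_nonneg:
  assumes "psd M" "psd S"
  shows "0 \<le> M \<bullet> S"
  using assms(2)
  \<comment> \<open>Subtracting the rank-one psd part \<open>outer (S$i) / S$i$i\<close> keeps \<open>S\<close> psd and creates a new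
      zero on the diagonal, so induct on the number of nonzero diagonal entries.\<close>
proof (induction "card {i. S$i$i \<noteq> 0}" arbitrary: S rule: less_induct)
  case less
  show ?case
  proof (cases "\<exists>i. S$i$i \<noteq> 0")
    case False
    then have "S$i$j = 0" for i j using psd_eq_0_if_diag_eq_0[OF less.prems] by blast
    then have "S = 0" by (simp add: vec_eq_iff)
    then show ?thesis by simp
  next
    case True
    then obtain i where "S$i$i \<noteq> 0" by blast
    with psd_diag_nonneg[OF less.prems] have d: "0 < S$i$i" by (simp add: order_less_le)
    define S' where "S' = S - (1 / S$i$i) *\<^sub>R outer (S$i)"
    have "psd S'" unfolding S'_def using less.prems d by (rule psd_schur_complement)
    have S'_diag: "S'$j$j = S$j$j - (S$i$j)\<^sup>2 / S$i$i" for j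
      by (simp add: S'_def outer_def power2_eq_square)
    have "{j. S'$j$j \<noteq> 0} \<subset> {j. S$j$j \<noteq> 0}"
    proof
      show "{j. S'$j$j \<noteq> 0} \<subseteq> {j. S$j$j \<noteq> 0}"
      proof (intro subsetI CollectI notI)
        fix j assume "j \<in> {j. S'$j$j \<noteq> 0}" "S$j$j = 0"
        then have "S$j$i = 0" using psd_eq_0_if_diag_eq_0[OF less.prems] by blast
        then have "S$i$j = 0" using less.prems by (simp add: psd_def symm_iff)
        with \<open>S$j$j = 0\<close> \<open>j \<in> {j. S'$j$j \<noteq> 0}\<close> show False by (simp add: S'_diag)
      qed
      have "S'$i$i = 0" using d by (simp add: S'_diag power2_eq_square)
      then show "{j. S'$j$j \<noteq> 0} \<noteq> {j. S$j$j \<noteq> 0}" using d by force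
    qed
    then have "card {j. S'$j$j \<noteq> 0} < card {j. S$j$j \<noteq> 0}"
      by (simp add: psubset_card_mono)
    then have "0 \<le> M \<bullet> S'" using \<open>psd S'\<close> by (rule less.hyps)
    moreover have "0 \<le> M \<bullet> outer (S$i)"
      using assms(1) by (simp add: psd_def flip: quad_form_eq_inner_outer)
    ultimately show ?thesis
      using d by (simp add: S'_def inner_diff_right) (meson divide_nonneg_pos order_trans)
  qed
qed

lemma finite_eigenvalues:
  fixes M :: "real^'n::finite^'n"
  assumes "symm M"
  shows "finite {c. \<exists>v. v \<noteq> 0 \<and> M *v v = c *\<^sub>R v}" (is "finite ?E")
proof -
  define f where "f c = (SOME v. v \<noteq> 0 \<and> M *v v = c *\<^sub>R v)" for c
  have f: "f c \<noteq> 0 \<and> M *v f c = c *\<^sub>R f c" if "c \<in> ?E" for c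
    unfolding f_def by (rule someI_ex) (use that in simp)
  have "inj_on f ?E"
  proof (rule inj_onI)
    fix c d assume c: "c \<in> ?E" and d: "d \<in> ?E" and "f c = f d"
    then have "c *\<^sub>R f c = d *\<^sub>R f c" using f[OF c] f[OF d] by metis
    then have "(c - d) *\<^sub>R f c = 0" by (simp add: scaleR_left_diff_distrib)
    then show "c = d" using f[OF c] by simp
  qed
  have "pairwise orthogonal (f ` ?E)"
  proof (rule pairwiseI)
    fix x y assume "x \<in> f ` ?E" "y \<in> f ` ?E" "x \<noteq> y"
    then obtain c d where c: "c \<in> ?E" and d: "d \<in> ?E" and xy: "x = f c" "y = f d" "c \<noteq> d"
      by blast
    have "c * (f c \<bullet> f d) = d * (f c \<bullet> f d)"
      using symm_quad_form_commute[OF assms, of "f d" "f c"] f[OF c] f[OF d]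
      by (simp add: inner_commute[of "f d"])
    then have "(c - d) * (f c \<bullet> f d) = 0" by (simp add: left_diff_distrib)
    then show "orthogonal x y" using xy by (simp add: orthogonal_def)
  qed
  moreover have "0 \<notin> f ` ?E" using f by force
  ultimately have "independent (f ` ?E)" by (rule pairwise_orthogonal_independent)
  then have "finite (f ` ?E)" using independent_bound by blast
  then show ?thesis using \<open>inj_on f ?E\<close> by (rule finite_imageD)
qed

lemma symm_obtains_min_eigenvalue:
  fixes M :: "real^'n::finite^'n"
  assumes "symm M"
  obtains c v where "v \<noteq> 0" "M *v v = c *\<^sub>R v" "\<And>u. c * (u \<bullet> u) \<le> u \<bullet> (M *v u)"
proof -
  have "continuous_on (sphere 0 1) (\<lambda>v. v \<bullet> (M *v v))" by (intro continuous_intros)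
  moreover have "sphere (0 :: real^'n) 1 \<noteq> {}" by simp
  ultimately obtain v where v: "v \<in> sphere 0 1"
    and v_min: "\<And>u. u \<in> sphere 0 1 \<Longrightarrow> v \<bullet> (M *v v) \<le> u \<bullet> (M *v u)"
    using continuous_attains_inf[OF compact_sphere] by blast
  define c where "c = v \<bullet> (M *v v)"
  have vv: "v \<bullet> v = 1" using v by (simp add: dot_square_norm)
  have rayleigh: "c * (u \<bullet> u) \<le> u \<bullet> (M *v u)" for u
  proof (cases "u = 0")
    case False
    have "c \<le> (u /\<^sub>R norm u) \<bullet> (M *v (u /\<^sub>R norm u))"
      using False v_min[of "u /\<^sub>R norm u"] unfolding c_def by simp
    also have "\<dots> = (u \<bullet> (M *v u)) / (u \<bullet> u)"
      using False by (simp add: matrix_vector_mult_scaleR dot_square_norm power2_eq_square field_simps)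
    finally show ?thesis using False by (simp add: field_simps)
  qed simp
  \<comment> \<open>first-order optimality of the Rayleigh quotient at \<open>v\<close> in the direction \<open>w\<close>\<close>
  define w where "w = M *v v - c *\<^sub>R v"
  have "0 \<le> (2 * (w \<bullet> w)) * t + (w \<bullet> (M *v w) - c * (w \<bullet> w)) * t\<^sup>2" for t
  proof -
    have Mv: "w \<bullet> (M *v v) = w \<bullet> w + c * (v \<bullet> w)"
      using inner_add_right[of w w "c *\<^sub>R v"] by (simp add: w_def inner_commute)
    have vtw: "(v + t *\<^sub>R w) \<bullet> (v + t *\<^sub>R w) = 1 + 2 * t * (v \<bullet> w) + t\<^sup>2 * (w \<bullet> w)"
      by (simp add: inner_add_left inner_add_right vv inner_commute[of w v] power2_eq_square distrib_left)
    have "c * ((v + t *\<^sub>R w) \<bullet> (v + t *\<^sub>R w)) \<le> (v + t *\<^sub>R w) \<bullet> (M *v (v + t *\<^sub>R w))"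
      by (rule rayleigh)
    also have "\<dots> = c + 2 * t * (w \<bullet> (M *v v)) + t\<^sup>2 * (w \<bullet> (M *v w))"
      using quad_form_add_scaleR[OF assms, of v t w] by (simp add: c_def)
    finally show ?thesis unfolding Mv vtw by (simp add: algebra_simps)
  qed
  then have "2 * (w \<bullet> w) = 0" by (rule linear_coeff_eq_0_if_quadratic_nonneg)
  then have "M *v v = c *\<^sub>R v" by (simp add: w_def)
  moreover have "v \<noteq> 0" using v by auto
  ultimately show ?thesis using rayleigh that by blast
qed

lemma psd_shift_if_lambda_min_ge:
  fixes M :: "real^'n::finite^'n"
  assumes "symm M" "- t \<le> lambda_min M"
  shows "psd (M + t *\<^sub>R mat 1)"
proof -
  obtain c v where "v \<noteq> 0" "M *v v = c *\<^sub>R v" and rayleigh: "\<And>u. c * (u \<bullet> u) \<le> u \<bullet> (M *v u)"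
    using symm_obtains_min_eigenvalue[OF assms(1)] by blast
  then have "lambda_min M \<le> c"
    unfolding lambda_min_def by (intro Min_le finite_eigenvalues[OF assms(1)]) blast
  then have "0 \<le> u \<bullet> ((M + t *\<^sub>R mat 1) *v u)" for u
  proof -
    have "0 \<le> (c + t) * (u \<bullet> u)" using \<open>lambda_min M \<le> c\<close> assms(2) by simp
    also have "\<dots> \<le> u \<bullet> (M *v u) + t * (u \<bullet> u)" using rayleigh[of u] by (simp add: distrib_right)
    also have "\<dots> = u \<bullet> ((M + t *\<^sub>R mat 1) *v u)"
      by (simp add: matrix_vector_mult_add_rdistrib mat_1_mult_vector_scaleR inner_add_right)
    finally show ?thesis .
  qed
  moreover have "symm (M + t *\<^sub>R mat 1)"
    using assms(1) by (simp add: symm_add symm_scaleR symm_iff mat_def)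
  ultimately show ?thesis by (simp add: psd_def)
qed

lemma norm_step_le:
  fixes U W r :: "'a::real_inner"
  assumes "(U + s *\<^sub>R r - W) \<bullet> r \<le> e" "0 \<le> s"
  shows "(norm (U + s *\<^sub>R r - W))\<^sup>2 \<le> (norm (U - W))\<^sup>2 + 2 * s * e - s\<^sup>2 * (norm r)\<^sup>2"
proof -
  define V where "V = U - W"
  have "(norm (V + s *\<^sub>R r))\<^sup>2 = (norm V)\<^sup>2 + 2 * s * ((V + s *\<^sub>R r) \<bullet> r) - s\<^sup>2 * (norm r)\<^sup>2"
    unfolding power2_norm_eq_inner
    by (simp add: inner_add_left inner_add_right inner_commute[of r V] power2_eq_square algebra_simps)
  also have "\<dots> \<le> (norm V)\<^sup>2 + 2 * s * e - s\<^sup>2 * (norm r)\<^sup>2"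
    using assms by (simp add: V_def mult_left_mono diff_add_eq)
  finally show ?thesis by (simp add: V_def diff_add_eq)
qed

lemma summable_if_quasi_fejer:
  fixes E a b :: "nat \<Rightarrow> real"
  assumes step: "\<And>k. E (Suc k) \<le> E k + a k - b k"
    and "\<And>k. 0 \<le> E k" "\<And>k. 0 \<le> a k" "summable a" "\<And>k. 0 \<le> b k"
  shows "summable b"
proof (rule summableI_nonneg_bounded)
  fix n
  have "E n + (\<Sum>k<n. b k) \<le> E 0 + (\<Sum>k<n. a k)"
  proof (induction n)
    case (Suc n)
    then show ?case using step[of n] by simp
  qed simp
  also have "(\<Sum>k<n. a k) \<le> suminf a"
    using assms by (intro sum_le_suminf) auto
  finally show "(\<Sum>k<n. b k) \<le> E 0 + suminf a" using assms(2)[of n] by linarith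
qed (use assms in auto)

lemma residual_tendsto_0_if_quasi_fejer:
  fixes U r :: "nat \<Rightarrow> 'a::real_inner"
  assumes step: "\<And>k. U (Suc k) = U k + s k *\<^sub>R r k"
    and gap: "\<And>k. (U (Suc k) - W) \<bullet> r k \<le> e k"
    and s: "0 < s_min" "\<And>k. s_min \<le> s k \<and> s k \<le> s_max"
    and e: "\<And>k. 0 \<le> e k" "summable e"
  shows "r \<longlonglongrightarrow> 0"
proof -
  have s_nonneg: "0 \<le> s k" for k using s(1) s(2)[of k] by linarith
  have fejer: "(norm (U (Suc k) - W))\<^sup>2 \<le> (norm (U k - W))\<^sup>2 + 2 * s k * e k - (s k)\<^sup>2 * (norm (r k))\<^sup>2" for k
    using norm_step_le[of "U k" "s k" "r k" W "e k"] gap[of k] s_nonneg[of k] by (simp add: step)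
  have "summable (\<lambda>k. 2 * s k * e k)"
  proof (rule summable_comparison_test)
    have "norm (2 * s k * e k) \<le> 2 * s_max * e k" for k
      using s_nonneg[of k] e(1)[of k] s(2)[of k] by (simp add: abs_mult mult_right_mono)
    then show "\<exists>N. \<forall>k\<ge>N. norm (2 * s k * e k) \<le> 2 * s_max * e k" by blast
    show "summable (\<lambda>k. 2 * s_max * e k)" using e(2) by (rule summable_mult)
  qed
  then have "summable (\<lambda>k. (s k)\<^sup>2 * (norm (r k))\<^sup>2)"
    using summable_if_quasi_fejer[where E = "\<lambda>k. (norm (U k - W))\<^sup>2" and a = "\<lambda>k. 2 * s k * e k"
        and b = "\<lambda>k. (s k)\<^sup>2 * (norm (r k))\<^sup>2"] fejer s_nonneg e(1)
    by simp
  then have summable_bound: "summable (\<lambda>k. (s k)\<^sup>2 * (norm (r k))\<^sup>2 / s_min\<^sup>2)"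
    by (rule summable_divide)
  have bound: "(norm (r k))\<^sup>2 \<le> (s k)\<^sup>2 * (norm (r k))\<^sup>2 / s_min\<^sup>2" for k
  proof -
    have "s_min\<^sup>2 \<le> (s k)\<^sup>2" using s by (simp add: power_mono)
    then show ?thesis using s(1) by (simp add: field_simps mult_right_mono)
  qed
  have "summable (\<lambda>k. (norm (r k))\<^sup>2)"
    by (rule summable_comparison_test'[OF summable_bound]) (simp add: bound)
  then have "(\<lambda>k. sqrt ((norm (r k))\<^sup>2)) \<longlonglongrightarrow> sqrt 0"
    by (intro tendsto_real_sqrt summable_LIMSEQ_zero)
  then show ?thesis by (simp add: tendsto_norm_zero_iff)
qed

lemma Aop_add: "Aop A (M + N) = Aop A M + Aop A N"
  and Aop_diff: "Aop A (M - N) = Aop A M - Aop A N"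
  and Aop_scaleR: "Aop A (c *\<^sub>R M) = c *\<^sub>R Aop A M"
  and Aop_0: "Aop A 0 = 0"
  by (simp_all add: Aop_def frob_inner_eq_inner vec_eq_iff inner_add_right inner_diff_right)

lemma Aadj_inner_eq_inner_Aop: "Aadj A y \<bullet> V = y \<bullet> Aop A V"
proof -
  have "Aadj A y \<bullet> V = (\<Sum>i\<in>UNIV. y$i * (A i \<bullet> V))"
    by (simp add: Aadj_def inner_sum_left)
  then show ?thesis by (simp add: Aop_def frob_inner_eq_inner inner_vec_def[of y])
qed

lemma symm_Aadj: "(\<And>i. symm (A i)) \<Longrightarrow> symm (Aadj A y)"
  by (simp add: symm_iff Aadj_def)

lemma matrix_inv_right: "invertible M \<Longrightarrow> M ** matrix_inv M = mat 1"
  unfolding invertible_def matrix_inv_def by (rule someI_ex[THEN conjunct1])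

lemma Aop_Aadj_matrix_inv:
  assumes "invertible (AAt A)"
  shows "Aop A (Aadj A (matrix_inv (AAt A) *v v)) = v"
proof -
  have "Aop A (Aadj A u) = AAt A *v u" for u
    by (simp add: Aop_def Aadj_def AAt_def frob_inner_eq_inner vec_eq_iff matrix_vector_mult_def
        inner_sum_right mult.commute)
  then show ?thesis by (simp add: matrix_vector_mul_assoc matrix_inv_right[OF assms])
qed

lemma tendsto_Aop [tendsto_intros]: "(f \<longlongrightarrow> M) F \<Longrightarrow> ((\<lambda>x. Aop A (f x)) \<longlongrightarrow> Aop A M) F"
  unfolding Aop_def frob_inner_eq_inner by (intro tendsto_intros)

lemma tendsto_Aadj [tendsto_intros]: "(f \<longlongrightarrow> y) F \<Longrightarrow> ((\<lambda>x. Aadj A (f x)) \<longlongrightarrow> Aadj A y) F"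
  unfolding Aadj_def by (intro tendsto_intros)

lemma tendsto_Diagm [tendsto_intros]: "(f \<longlongrightarrow> z) F \<Longrightarrow> ((\<lambda>x. Diagm (f x)) \<longlongrightarrow> Diagm z) F"
  unfolding Diagm_def by (intro tendsto_vec_lambda) (auto intro: tendsto_vec_nth)

lemma tendsto_diagv [tendsto_intros]: "(f \<longlongrightarrow> M) F \<Longrightarrow> ((\<lambda>x. diagv (f x)) \<longlongrightarrow> diagv M) F"
  unfolding diagv_def by (intro tendsto_intros)

lemma inner_Diagm_diagv_mult:
  assumes "symm S" "diagv S = (\<chi> i. 1)"
  shows "Diagm (diagv (G ** S)) \<bullet> S = G \<bullet> S"
proof -
  have "Diagm (diagv (G ** S)) \<bullet> S = (\<Sum>i\<in>UNIV. \<Sum>j\<in>UNIV. G$i$j * S$j$i)"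
    using assms(2) by (simp add: Diagm_inner diagv_def matrix_matrix_mult_def vec_eq_iff)
  also have "\<dots> = G \<bullet> S"
    using assms(1) by (simp add: inner_vec_def symm_iff)
  finally show ?thesis .
qed

lemma approx_KKT_iterate:
  fixes Y :: "nat \<Rightarrow> real^'n::finite"
  assumes S: "S = (\<Sum>j<p. outer (Y j))" and X: "X = G - Diagm (diagv (G ** S))"
    and rows: "\<And>i. (\<Sum>j<p. (Y j $ i)\<^sup>2) = 1" and "symm G" and "- t \<le> lambda_min X"
  shows "psd S" "diagv S = (\<chi> i. 1)" "X \<bullet> S = 0" "psd (X + t *\<^sub>R mat 1)"
proof -
  show "psd S" by (simp add: S psd_sum_outer)
  show "diagv S = (\<chi> i. 1)" by (simp add: S diagv_sum_outer rows)
  then show "X \<bullet> S = 0"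
    using \<open>psd S\<close> by (simp add: X inner_diff_left inner_Diagm_diagv_mult psd_def)
  have "symm X" using \<open>symm G\<close> by (simp add: X symm_diff symm_Diagm)
  then show "psd (X + t *\<^sub>R mat 1)" using assms(5) by (rule psd_shift_if_lambda_min_ge)
qed

lemma KKT_gap_bound:
  fixes X S :: "real^'n::finite^'n"
  assumes KKT: "is_KKT A b C S' y' X' z'"
    and "psd S" "diagv S = (\<chi> i. 1)" "X \<bullet> S = 0" "psd (X + t *\<^sub>R mat 1)"
    and feas: "Aop A (X + Diagm z) = b"
  shows "(X + Diagm z - (X' + Diagm z')) \<bullet> (S + C - Aadj A y) \<le> t * CARD('n)"
proof -
  from KKT have S': "S' = Aadj A y' - C" "psd S'" "diagv S' = (\<chi> i. 1)"
    and X': "psd X'" "X' \<bullet> S' = 0" "Aop A (X' + Diagm z') = b"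
    unfolding is_KKT_def frob_inner_eq_inner by auto
  define V where "V = X + Diagm z - (X' + Diagm z')"
  have "Aop A V = 0" by (simp add: V_def Aop_diff feas X'(3))
  then have V_perp: "V \<bullet> Aadj A u = 0" for u
    unfolding inner_commute[of V] Aadj_inner_eq_inner_Aop by simp
  \<comment> \<open>\<open>V\<close> is orthogonal to the range of \<open>Aadj A\<close>, and diagonal matrices are orthogonal
      to \<open>S - S'\<close>\<close>
  have "S + C - Aadj A y = (S - S') + (Aadj A y' - Aadj A y)" by (simp add: S'(1))
  then have "V \<bullet> (S + C - Aadj A y) = V \<bullet> (S - S') + V \<bullet> (Aadj A y' - Aadj A y)"
    by (simp only: inner_add_right)
  also have "\<dots> = V \<bullet> (S - S')" by (simp add: inner_diff_right V_perp)
  also have "\<dots> = - (X \<bullet> S') - X' \<bullet> S"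
  proof -
    have "Diagm u \<bullet> (S - S') = 0" for u
      using \<open>diagv S = (\<chi> i. 1)\<close> S'(3) by (simp add: Diagm_inner inner_diff_right diagv_def vec_eq_iff)
    then show ?thesis
      using \<open>X \<bullet> S = 0\<close> X'(2) by (simp add: V_def inner_diff_left inner_add_left inner_diff_right)
  qed
  also have "\<dots> \<le> t * CARD('n)"
  proof -
    have "0 \<le> (X + t *\<^sub>R mat 1) \<bullet> S'" using assms(5) S'(2) by (rule psd_inner_nonneg)
    moreover have "mat 1 \<bullet> S' = CARD('n)"
      using S'(3) by (simp add: mat_1_inner diagv_def vec_eq_iff)
    moreover have "0 \<le> X' \<bullet> S" using X'(1) \<open>psd S\<close> by (rule psd_inner_nonneg)
    ultimately show ?thesis by (simp add: inner_add_left)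
  qed
  finally show ?thesis by (simp add: V_def)
qed

lemma is_KKT_of_limit:
  assumes lim: "((\<lambda>j. (S j, y j, X j, z j)) \<longlongrightarrow> (Sh, yh, Xh, zh)) sequentially"
    and res: "(\<lambda>j. S j + C - Aadj A (y j)) \<longlonglongrightarrow> 0" and t: "t \<longlonglongrightarrow> 0"
    and "\<And>j. psd (S j)" "\<And>j. diagv (S j) = (\<chi> i. 1)" "\<And>j. X j \<bullet> S j = 0"
    and "\<And>j. psd (X j + t j *\<^sub>R mat 1)" "\<And>j. Aop A (X j + Diagm (z j)) = b"
  shows "is_KKT A b C Sh yh Xh zh"
proof -
  have S: "S \<longlonglongrightarrow> Sh" and y: "y \<longlonglongrightarrow> yh" and X: "X \<longlonglongrightarrow> Xh" and z: "z \<longlonglongrightarrow> zh"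
    using tendsto_fst[OF lim] tendsto_fst[OF tendsto_snd[OF lim]]
      tendsto_fst[OF tendsto_snd[OF tendsto_snd[OF lim]]]
      tendsto_snd[OF tendsto_snd[OF tendsto_snd[OF lim]]]
    by simp_all
  have "(\<lambda>j. S j + C - Aadj A (y j)) \<longlonglongrightarrow> Sh + C - Aadj A yh"
    by (intro tendsto_intros S y)
  from LIMSEQ_unique[OF this res] have "Sh = Aadj A yh - C" by (simp add: eq_diff_eq diff_eq_eq)
  moreover have "Sh \<in> {M. psd M}"
    by (rule Lim_in_closed_set[OF closed_psd _ _ S]) (use assms(4) in auto)
  moreover have "diagv Sh = (\<chi> i. 1)"
    using tendsto_diagv[OF S] assms(5) by (simp add: LIMSEQ_const_iff)
  moreover have "Xh \<in> {M. psd M}"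
  proof (rule Lim_in_closed_set[OF closed_psd])
    show "(\<lambda>j. X j + t j *\<^sub>R mat 1) \<longlonglongrightarrow> Xh"
      using tendsto_add[OF X tendsto_scaleR[OF t tendsto_const]] by simp
  qed (use assms(7) in auto)
  moreover have "Xh \<bullet> Sh = 0"
    using tendsto_inner[OF X S] assms(6) by (simp add: LIMSEQ_const_iff)
  moreover have "Aop A (Xh + Diagm zh) = b"
    using tendsto_Aop[OF tendsto_add[OF X tendsto_Diagm[OF z]], of A] assms(8) by (simp add: LIMSEQ_const_iff)
  ultimately show ?thesis by (simp add: is_KKT_def frob_inner_eq_inner)
qed

lemma is_KKT_of_limit_point:
  assumes "strict_mono r" "\<And>j. 1 \<le> r j"
    and lim: "((\<lambda>j. (S (r j), y (r j), X (r j), z (r j))) \<longlongrightarrow> (Sh, yh, Xh, zh)) sequentially"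
    and res: "(\<lambda>k. S (Suc k) + C - Aadj A (y (Suc k))) \<longlonglongrightarrow> 0" and t: "t \<longlonglongrightarrow> 0"
    and "\<And>k. psd (S (Suc k))" "\<And>k. diagv (S (Suc k)) = (\<chi> i. 1)" "\<And>k. X (Suc k) \<bullet> S (Suc k) = 0"
    and "\<And>k. psd (X (Suc k) + t k *\<^sub>R mat 1)" "\<And>k. Aop A (X (Suc k) + Diagm (z (Suc k))) = b"
  shows "is_KKT A b C Sh yh Xh zh"
proof -
  define r' where "r' j = r j - 1" for j
  have r_Suc: "r j = Suc (r' j)" for j using assms(2)[of j] by (simp add: r'_def)
  have "strict_mono r'" using assms(1) by (simp add: strict_mono_def r_Suc)
  show ?thesis
  proof (rule is_KKT_of_limit[OF lim, where t = "\<lambda>j. t (r' j)"])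
    show "(\<lambda>j. S (r j) + C - Aadj A (y (r j))) \<longlonglongrightarrow> 0"
      using LIMSEQ_subseq_LIMSEQ[OF res \<open>strict_mono r'\<close>] by (simp add: o_def r_Suc)
    show "(\<lambda>j. t (r' j)) \<longlonglongrightarrow> 0"
      using LIMSEQ_subseq_LIMSEQ[OF t \<open>strict_mono r'\<close>] by (simp add: o_def)
  qed (simp_all add: r_Suc assms(6-))
qed

theorem theorem5p1:
  fixes A :: "'m::finite \<Rightarrow> real^'n::finite^'n"
    and b :: "real^'m" and C :: "real^'n^'n"
    and sigma_min sigma_max :: real
    and eps tau sigma :: "nat \<Rightarrow> real"
    and p :: "nat \<Rightarrow> nat"
    and Y :: "nat \<Rightarrow> nat \<Rightarrow> real^'n"
    and S X Xt :: "nat \<Rightarrow> real^'n^'n"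
    and y :: "nat \<Rightarrow> real^'m" and z :: "nat \<Rightarrow> real^'n"
    and Sh Xh :: "real^'n^'n" and yh :: "real^'m" and zh :: "real^'n"
  assumes symA: "\<And>i. symm (A i)"
    and inv: "invertible (AAt A)"
    and symC: "symm C"
    and KKT_exists: "\<exists>S0 y0 X0 z0. is_KKT A b C S0 y0 X0 z0"
    and sig: "0 < sigma_min" "sigma_min < sigma_max"
    and eps_pos: "\<And>k. 0 < eps k" and eps_sum: "summable eps"
    and tau_pos: "\<And>k. 0 < tau k" and tau_sum: "summable tau"
    and y0: "y 0 = 0" and Xt0: "Xt 0 = 0"
    and sigk: "\<And>k. sigma_min \<le> sigma k \<and> sigma k \<le> sigma_max"
    and ppos: "\<And>k. 0 < p (Suc k)"
    and rows: "\<And>k i. (\<Sum>j<p (Suc k). (Y (Suc k) j $ i)^2) = 1"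
    and Sdef: "\<And>k. S (Suc k) = (\<chi> i l. \<Sum>j<p (Suc k). Y (Suc k) j $ i * Y (Suc k) j $ l)"
    and ydef: "\<And>k. y (Suc k) = matrix_inv (AAt A) *v Aop A (S (Suc k) + C)"
    and Xtdef: "\<And>k. Xt (Suc k) = Xt k - sigma k *\<^sub>R (Aadj A (y (Suc k)) - S (Suc k) - C)"
    and zdef: "\<And>k. z (Suc k) = diagv ((Xt (Suc k) + Aadj A (matrix_inv (AAt A) *v b)) ** S (Suc k))"
    and Xdef: "\<And>k. X (Suc k) = Xt (Suc k) + Aadj A (matrix_inv (AAt A) *v b) - Diagm (z (Suc k))"
    and stop1: "\<And>k. sqrt (\<Sum>j<p (Suc k). (norm (X (Suc k) *v Y (Suc k) j))^2) \<le> eps k"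
    and stop2: "\<And>k. lambda_min (X (Suc k)) \<ge> - tau k"
    and limpt: "\<exists>r. strict_mono r \<and> (\<forall>j. 1 \<le> r j) \<and>
        ((\<lambda>j. (S (r j), y (r j), X (r j), z (r j))) \<longlongrightarrow> (Sh, yh, Xh, zh)) sequentially"
  shows "is_KKT A b C Sh yh Xh zh"
proof -
  obtain S' y' X' z' where KKT: "is_KKT A b C S' y' X' z'" using KKT_exists by blast
  define D where "D = Aadj A (matrix_inv (AAt A) *v b)"
  define res where "res = (\<lambda>k. S (Suc k) + C - Aadj A (y (Suc k)))"
  have Xt_step: "Xt (Suc k) = Xt k + sigma k *\<^sub>R res k" for k
    using Xtdef[of k] by (simp add: res_def algebra_simps)
  have "Aop A (res k) = 0" for k
    using ydef[of k] by (simp add: res_def Aop_add Aop_diff Aop_Aadj_matrix_inv[OF inv])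
  then have Aop_Xt: "Aop A (Xt k) = 0" for k
    by (induction k) (simp_all add: Xt0 Aop_0 Xt_step Aop_add Aop_scaleR)
  have S_eq: "S (Suc k) = (\<Sum>j<p (Suc k). outer (Y (Suc k) j))" for k
    by (simp add: Sdef gram_eq_sum_outer)
  have symm_S: "symm (S (Suc k))" for k
    using psd_sum_outer unfolding S_eq psd_def by blast
  have symm_Xt: "symm (Xt k)" for k
    by (induction k) (simp_all add: Xt0 symm_0 Xt_step res_def symm_add symm_diff symm_scaleR
        symm_Aadj symA symC symm_S)
  have symm_D: "symm D" by (simp add: D_def symm_Aadj symA)
  have X_eq: "X (Suc k) = (Xt (Suc k) + D) - Diagm (diagv ((Xt (Suc k) + D) ** S (Suc k)))" for k
    by (simp add: Xdef zdef D_def)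
  have iterate: "psd (S (Suc k))" "diagv (S (Suc k)) = (\<chi> i. 1)" "X (Suc k) \<bullet> S (Suc k) = 0"
      "psd (X (Suc k) + tau k *\<^sub>R mat 1)" for k
    using approx_KKT_iterate[OF S_eq X_eq rows symm_add[OF symm_Xt symm_D] stop2] by simp_all
  have feas: "Aop A (X (Suc k) + Diagm (z (Suc k))) = b" for k
    using Aop_Xt[of "Suc k"] by (simp add: Xdef Aop_add D_def Aop_Aadj_matrix_inv[OF inv])
  \<comment> \<open>the multiplier \<open>Xt\<close> that corresponds to the KKT point\<close>
  define W where "W = X' + Diagm z' - D"
  have gap: "(Xt (Suc k) - W) \<bullet> res k \<le> tau k * CARD('n)" for k
  proof -
    have "Xt (Suc k) - W = X (Suc k) + Diagm (z (Suc k)) - (X' + Diagm z')"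
      by (simp add: W_def Xdef D_def)
    then show ?thesis using KKT_gap_bound[OF KKT iterate feas] by (simp add: res_def)
  qed
  have "res \<longlonglongrightarrow> 0"
    using tau_pos tau_sum
    by (intro residual_tendsto_0_if_quasi_fejer[where U = Xt, OF Xt_step gap sig(1) sigk])
       (auto intro: less_imp_le summable_mult2)
  moreover obtain r where "strict_mono r" "\<And>j. 1 \<le> r j"
    and "((\<lambda>j. (S (r j), y (r j), X (r j), z (r j))) \<longlongrightarrow> (Sh, yh, Xh, zh)) sequentially"
    using limpt by blast
  ultimately show ?thesis
    using summable_LIMSEQ_zero[OF tau_sum] iterate feas
    by (intro is_KKT_of_limit_point[where t = tau]) (simp_all add: res_def)
qed

end
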